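(* Let $\{(\Gamma_t,\theta_t)\}_{t\in[0,\underline t)}$ evolve by $\partial_t\gamma=\kappa\nu_\theta+\upsilon_T T$, $\partial_t\theta=\upsilon_\theta$, where for all $t\in[0,\underline t)$ and all $s\in\mathbb{R}/L(\Gamma_t)\mathbb{Z}$ (arclength measured from the point $u=0$) the tangential velocity satisfies $$\upsilon_T(t,s)=\upsilon_{T,0}(t)+\int_0^s\kappa\psi_1\,d\bar s-\frac{s}{L(\Gamma_t)}\int_{\Gamma_t}\kappa\psi_1\,d\bar s,$$ with $\upsilon_{T,0}\in\mathcal C^1([0,\underline t))$ arbitrary. Then for every $u\in S^1$ the quantity $g(t,u)/L(\Gamma_t)$ is constant in $t$.
   Context: $S^1=\mathbb{R}/2\pi\mathbb{Z}$; $\Gamma_t$ is a closed curve parametrized by $\gamma(t,\cdot):S^1\to\mathbb{R}^3$, $g=\|\partial_u\gamma\|$, $ds=g\,du$, $\partial_s=g^{-1}\partial_u$, $L(\Gamma_t)=\int_{\Gamma_t}ds$ its length. $T,N,B$ is the Frenet frame, $\kappa$ the curvature. For an angle function $\theta(t,u)\in S^1$, $\nu_\theta=\cos\theta\,N+\sin\theta\,B$ and $\psi_1=\kappa\cos\theta$ (note $\kappa\nu_\theta=\cos\theta\,\partial_s^2\gamma+\sin\theta\,\partial_s\gamma\times\partial_s^2\gamma$). $\upsilon_\theta$ is a given $\mathcal C^1$ function. *)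

theory Defs
  imports "HOL-Analysis.Analysis"
begin

text \<open>Space-time functions are uncurried maps on I x R, where I is the time interval
  (here [0, tb)) and the second coordinate u is the curve parameter (2 pi-periodic).\<close>

definition Dt :: "real set \<Rightarrow> (real \<times> real \<Rightarrow> 'a::real_normed_vector) \<Rightarrow> real \<times> real \<Rightarrow> 'a" where
  "Dt I F p = vector_derivative (\<lambda>\<tau>. F (\<tau>, snd p)) (at (fst p) within I)"

definition Du :: "(real \<times> real \<Rightarrow> 'a::real_normed_vector) \<Rightarrow> real \<times> real \<Rightarrow> 'a" where
  "Du F p = vector_derivative (\<lambda>v. F (fst p, v)) (at (snd p))"

fun iterD :: "real set \<Rightarrow> bool list \<Rightarrow> (real \<times> real \<Rightarrow> 'a::real_normed_vector) \<Rightarrow> real \<times> real \<Rightarrow> 'a" where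
  "iterD I [] F = F"
| "iterD I (b # bs) F = (if b then Dt I (iterD I bs F) else Du (iterD I bs F))"

definition Ck_on :: "real set \<Rightarrow> nat \<Rightarrow> (real \<times> real \<Rightarrow> 'a::real_normed_vector) \<Rightarrow> bool" where
  "Ck_on I k F \<longleftrightarrow>
     (\<forall>bs. length bs \<le> k \<longrightarrow>
        continuous_on (Sigma I (\<lambda>_. UNIV)) (iterD I bs F) \<and>
        (length bs < k \<longrightarrow> (\<forall>p \<in> Sigma I (\<lambda>_. UNIV).
           ((\<lambda>\<tau>. iterD I bs F (\<tau>, snd p)) has_vector_derivative Dt I (iterD I bs F) p) (at (fst p) within I) \<and>
           ((\<lambda>v. iterD I bs F (fst p, v)) has_vector_derivative Du (iterD I bs F) p) (at (snd p)))))"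

definition smooth_on_st :: "real set \<Rightarrow> (real \<times> real \<Rightarrow> 'a::real_normed_vector) \<Rightarrow> bool" where
  "smooth_on_st I F \<longleftrightarrow> (\<forall>k. Ck_on I k F)"

definition C1_time :: "real set \<Rightarrow> (real \<Rightarrow> real) \<Rightarrow> bool" where
  "C1_time I f \<longleftrightarrow> (\<exists>D. (\<forall>t\<in>I. (f has_real_derivative D t) (at t within I)) \<and> continuous_on I D)"

definition speed :: "(real \<Rightarrow> real \<Rightarrow> real^3) \<Rightarrow> real \<Rightarrow> real \<Rightarrow> real" where
  "speed \<gamma> t u = norm (vector_derivative (\<gamma> t) (at u))"

definition dS :: "(real \<Rightarrow> real \<Rightarrow> real^3) \<Rightarrow> (real \<Rightarrow> real \<Rightarrow> real^3) \<Rightarrow> real \<Rightarrow> real \<Rightarrow> real^3" where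
  "dS \<gamma> f t u = (1 / speed \<gamma> t u) *\<^sub>R vector_derivative (f t) (at u)"

definition tangent :: "(real \<Rightarrow> real \<Rightarrow> real^3) \<Rightarrow> real \<Rightarrow> real \<Rightarrow> real^3" where
  "tangent \<gamma> = dS \<gamma> \<gamma>"

definition curv_vec :: "(real \<Rightarrow> real \<Rightarrow> real^3) \<Rightarrow> real \<Rightarrow> real \<Rightarrow> real^3" where
  "curv_vec \<gamma> = dS \<gamma> (tangent \<gamma>)"

definition curvature :: "(real \<Rightarrow> real \<Rightarrow> real^3) \<Rightarrow> real \<Rightarrow> real \<Rightarrow> real" where
  "curvature \<gamma> t u = norm (curv_vec \<gamma> t u)"

definition curve_length :: "(real \<Rightarrow> real \<Rightarrow> real^3) \<Rightarrow> real \<Rightarrow> real" where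
  "curve_length \<gamma> t = integral {0..2*pi} (speed \<gamma> t)"

definition arclength :: "(real \<Rightarrow> real \<Rightarrow> real^3) \<Rightarrow> real \<Rightarrow> real \<Rightarrow> real" where
  "arclength \<gamma> t u = integral {0..u} (speed \<gamma> t)"

definition psi1 :: "(real \<Rightarrow> real \<Rightarrow> real^3) \<Rightarrow> (real \<Rightarrow> real \<Rightarrow> real) \<Rightarrow> real \<Rightarrow> real \<Rightarrow> real" where
  "psi1 \<gamma> \<theta> t u = curvature \<gamma> t u * cos (\<theta> t u)"

definition kappa_nu :: "(real \<Rightarrow> real \<Rightarrow> real^3) \<Rightarrow> (real \<Rightarrow> real \<Rightarrow> real) \<Rightarrow> real \<Rightarrow> real \<Rightarrow> real^3" where
  "kappa_nu \<gamma> \<theta> t u = cos (\<theta> t u) *\<^sub>R curv_vec \<gamma> t u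
                        + sin (\<theta> t u) *\<^sub>R cross3 (tangent \<gamma> t u) (curv_vec \<gamma> t u)"

text \<open>Tangential velocity, written at the point with parameter u in [0, 2 pi], i.e. at arclength
  s = arclength gamma t u:  vT0 t + int_0^s kappa psi1 ds - s/L int_Gamma kappa psi1 ds.\<close>
definition tangential_velocity ::
  "(real \<Rightarrow> real \<Rightarrow> real^3) \<Rightarrow> (real \<Rightarrow> real \<Rightarrow> real) \<Rightarrow> (real \<Rightarrow> real) \<Rightarrow> real \<Rightarrow> real \<Rightarrow> real" where
  "tangential_velocity \<gamma> \<theta> vT0 t u =
     vT0 t
     + integral {0..u} (\<lambda>v. curvature \<gamma> t v * psi1 \<gamma> \<theta> t v * speed \<gamma> t v)
     - arclength \<gamma> t u / curve_length \<gamma> t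
         * integral {0..2*pi} (\<lambda>v. curvature \<gamma> t v * psi1 \<gamma> \<theta> t v * speed \<gamma> t v)"

end

theory Submission
  imports Defs
begin

text \<open>Write \<open>V = \<partial>\<^sub>t\<gamma> = \<kappa>\<nu>\<^sub>\<theta> + \<upsilon>\<^sub>T T\<close>. Differentiating \<open>g = |\<partial>\<^sub>u\<gamma>|\<close> in time and
  commuting the mixed partials gives \<open>\<partial>\<^sub>t g = g \<langle>\<partial>\<^sub>s V, T\<rangle> = g (\<partial>\<^sub>s \<upsilon>\<^sub>T - \<kappa>\<psi>\<^sub>1)\<close>, because
  \<open>\<langle>V, \<partial>\<^sub>s T\<rangle> = \<langle>\<kappa>\<nu>\<^sub>\<theta>, \<kappa>N\<rangle> = \<kappa>\<psi>\<^sub>1\<close>. The prescribed tangential velocity has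
  \<open>\<partial>\<^sub>s \<upsilon>\<^sub>T = \<kappa>\<psi>\<^sub>1 - L\<^sup>-\<^sup>1 \<integral>\<kappa>\<psi>\<^sub>1 ds\<close>, so \<open>\<partial>\<^sub>t log g\<close> does not depend on \<open>u\<close>.
  Hence \<open>g(t,u) / g(t,u')\<close> is constant in time, and integrating over \<open>u'\<close> turns this into the
  constancy of \<open>g / L\<close>.\<close>

lemma smooth_on_st_imp_Ck_on: "smooth_on_st I F \<Longrightarrow> Ck_on I k F"
  unfolding smooth_on_st_def by blast

lemma Ck_on_has_vector_derivative_t:
  assumes "Ck_on I k F" "length bs < k" "t \<in> I"
  shows "((\<lambda>\<tau>. iterD I bs F (\<tau>, u)) has_vector_derivative Dt I (iterD I bs F) (t, u)) (at t within I)"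
  using assms unfolding Ck_on_def by fastforce

lemma Ck_on_has_vector_derivative_u:
  assumes "Ck_on I k F" "length bs < k" "t \<in> I"
  shows "((\<lambda>v. iterD I bs F (t, v)) has_vector_derivative Du (iterD I bs F) (t, u)) (at u)"
  using assms unfolding Ck_on_def by fastforce

lemma Ck_on_continuous_on:
  "Ck_on I k F \<Longrightarrow> length bs \<le> k \<Longrightarrow> continuous_on (I \<times> UNIV) (iterD I bs F)"
  unfolding Ck_on_def by blast

lemma Ck_on_continuous_on_u:
  assumes "Ck_on I k F" "length bs \<le> k" "t \<in> I"
  shows "continuous_on S (\<lambda>v. iterD I bs F (t, v))"
  by (rule continuous_on_compose2[OF Ck_on_continuous_on[OF assms(1,2)]])
     (use assms(3) in \<open>auto intro!: continuous_intros\<close>)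

lemma Ck_on_continuous_on_t:
  assumes "Ck_on I k F" "length bs \<le> k" "S \<subseteq> I"
  shows "continuous_on S (\<lambda>\<tau>. iterD I bs F (\<tau>, u))"
  by (rule continuous_on_compose2[OF Ck_on_continuous_on[OF assms(1,2)]])
     (use assms(3) in \<open>auto intro!: continuous_intros\<close>)

lemma Du_sub_eq_integral_Du_Dt:
  fixes F :: "real \<times> real \<Rightarrow> 'a::euclidean_space"
  assumes F: "Ck_on {a..<b} 2 F" and \<tau>: "\<tau> \<in> {a..<b}"
  shows "Du F (\<tau>, u) - Du F (a, u) = integral {a..\<tau>} (\<lambda>\<sigma>. Du (Dt {a..<b} F) (\<sigma>, u))"
proof -
  let ?I = "{a..<b}"
  have sub: "{a..\<tau>} \<subseteq> ?I" using \<tau> by auto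
  have F_eq: "F (\<tau>, v) - F (a, v) = integral {a..\<tau>} (\<lambda>\<sigma>. Dt ?I F (\<sigma>, v))" for v
  proof -
    have "((\<lambda>\<sigma>. Dt ?I F (\<sigma>, v)) has_integral F (\<tau>, v) - F (a, v)) {a..\<tau>}"
    proof (rule fundamental_theorem_of_calculus)
      fix \<sigma> assume "\<sigma> \<in> {a..\<tau>}"
      then show "((\<lambda>\<sigma>. F (\<sigma>, v)) has_vector_derivative Dt ?I F (\<sigma>, v)) (at \<sigma> within {a..\<tau>})"
        using has_vector_derivative_within_subset[OF Ck_on_has_vector_derivative_t[OF F, of "[]"] sub] sub
        by auto
    qed (use \<tau> in auto)
    then show ?thesis by (simp add: integral_unique)
  qed
  have lhs: "((\<lambda>v. F (\<tau>, v) - F (a, v)) has_vector_derivative Du F (\<tau>, u) - Du F (a, u)) (at u)"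
    using Ck_on_has_vector_derivative_u[OF F, of "[]"] \<tau> by (auto intro!: derivative_eq_intros)
  have "continuous_on (UNIV \<times> cbox a \<tau>) (\<lambda>x. Du (Dt ?I F) (snd x, fst x))"
    by (rule continuous_on_compose2[OF Ck_on_continuous_on[OF F, of "[False, True]", simplified]])
       (use sub in \<open>auto intro!: continuous_intros\<close>)
  then have cont: "continuous_on (UNIV \<times> cbox a \<tau>) (\<lambda>(v, \<sigma>). Du (Dt ?I F) (\<sigma>, v))"
    by (simp add: case_prod_unfold)
  have rhs: "((\<lambda>v. integral (cbox a \<tau>) (\<lambda>\<sigma>. Dt ?I F (\<sigma>, v))) has_vector_derivative
      integral (cbox a \<tau>) (\<lambda>\<sigma>. Du (Dt ?I F) (\<sigma>, u))) (at u within UNIV)"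
  proof (rule leibniz_rule_vector_derivative[OF _ _ cont])
    fix v \<sigma> assume "\<sigma> \<in> cbox a \<tau>"
    then show "((\<lambda>v. Dt ?I F (\<sigma>, v)) has_vector_derivative Du (Dt ?I F) (\<sigma>, v)) (at v within UNIV)"
      using Ck_on_has_vector_derivative_u[OF F, of "[True]"] sub by auto
  next
    fix v :: real
    show "(\<lambda>\<sigma>. Dt ?I F (\<sigma>, v)) integrable_on cbox a \<tau>"
      using Ck_on_continuous_on_t[OF F, of "[True]" "cbox a \<tau>"] sub
      by (intro integrable_continuous) auto
  qed auto
  show ?thesis
    using vector_derivative_unique_at[OF lhs] rhs F_eq by (simp add: cbox_interval)
qed

lemma Ck_on_Dt_Du_commute:
  fixes F :: "real \<times> real \<Rightarrow> 'a::euclidean_space"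
  assumes F: "Ck_on {a..<b} 2 F" and t: "t \<in> {a..<b}"
  shows "Dt {a..<b} (Du F) (t, u) = Du (Dt {a..<b} F) (t, u)"
proof -
  let ?I = "{a..<b}"
  define c where "c = (t + b) / 2"
  have c: "a < c" "t \<in> {a..c}" "{a..c} \<subseteq> ?I" using t by (auto simp: c_def)
  have D1: "((\<lambda>\<tau>. Du F (a, u) + integral {a..\<tau>} (\<lambda>\<sigma>. Du (Dt ?I F) (\<sigma>, u)))
      has_vector_derivative Du (Dt ?I F) (t, u)) (at t within {a..c})"
    using integral_has_vector_derivative[OF Ck_on_continuous_on_t[OF F, of "[False, True]" "{a..c}", simplified] c(2)] c(3)
    by (auto intro!: derivative_eq_intros)
  have eq: "Du F (\<tau>, u) = Du F (a, u) + integral {a..\<tau>} (\<lambda>\<sigma>. Du (Dt ?I F) (\<sigma>, u))"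
    if "\<tau> \<in> {a..c}" for \<tau>
    using Du_sub_eq_integral_Du_Dt[OF F, of \<tau> u] that c(3) by (auto simp: algebra_simps)
  have "((\<lambda>\<tau>. Du F (\<tau>, u)) has_vector_derivative Du (Dt ?I F) (t, u)) (at t within {a..c})"
    using has_vector_derivative_transform[OF c(2) eq D1] .
  moreover have "((\<lambda>\<tau>. Du F (\<tau>, u)) has_vector_derivative Dt ?I (Du F) (t, u)) (at t within {a..c})"
    using has_vector_derivative_within_subset[OF Ck_on_has_vector_derivative_t[OF F, of "[False]" t u] c(3)] t
    by simp
  ultimately show ?thesis
    using vector_derivative_unique_within_closed_interval[OF c(1) c(2)[folded cbox_interval]]
    by (simp add: cbox_interval)
qed

lemma has_real_derivative_inner:
  fixes f g :: "real \<Rightarrow> 'a::real_inner"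
  assumes "(f has_vector_derivative f') (at x within S)" "(g has_vector_derivative g') (at x within S)"
  shows "((\<lambda>x. f x \<bullet> g x) has_real_derivative f' \<bullet> g x + f x \<bullet> g') (at x within S)"
  using has_derivative_inner[OF assms[unfolded has_vector_derivative_def]]
  unfolding has_field_derivative_def
  by (rule has_derivative_eq_rhs) (auto simp: fun_eq_iff algebra_simps)

lemma has_real_derivative_norm:
  fixes f :: "real \<Rightarrow> 'a::real_inner"
  assumes f: "(f has_vector_derivative f') (at t within S)" and nz: "f t \<noteq> 0"
  shows "((\<lambda>t. norm (f t)) has_real_derivative sgn (f t) \<bullet> f') (at t within S)"
proof -
  have "((\<lambda>t. norm (f t)) has_derivative (\<lambda>h. (h *\<^sub>R f') \<bullet> sgn (f t))) (at t within S)"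
    using diff_chain_within[OF f[unfolded has_vector_derivative_def]
        has_derivative_at_withinI[OF has_derivative_norm[OF nz]]]
    by (simp add: o_def)
  then show ?thesis
    unfolding has_field_derivative_def
    by (rule has_derivative_eq_rhs) (auto simp: inner_commute fun_eq_iff)
qed

lemma has_vector_derivative_sgn:
  fixes f :: "real \<Rightarrow> 'a::real_inner"
  assumes f: "(f has_vector_derivative f') (at t within S)" and nz: "f t \<noteq> 0"
  shows "((\<lambda>t. sgn (f t)) has_vector_derivative
           (f' - (sgn (f t) \<bullet> f') *\<^sub>R sgn (f t)) /\<^sub>R norm (f t)) (at t within S)"
proof -
  have "((\<lambda>t. inverse (norm (f t))) has_real_derivative
      - (inverse (norm (f t)) * (sgn (f t) \<bullet> f') * inverse (norm (f t)))) (at t within S)"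
    using DERIV_inverse_fun[OF has_real_derivative_norm[OF f nz]] nz by (simp add: ac_simps)
  from has_vector_derivative_scaleR[OF this f] show ?thesis
    unfolding sgn_div_norm
    by (rule has_vector_derivative_eq_rhs) (simp add: algebra_simps)
qed

lemma Ck_on_has_real_derivative_norm_Du:
  fixes F :: "real \<times> real \<Rightarrow> 'a::euclidean_space"
  assumes F: "Ck_on {a..<b} 2 F" and t: "t \<in> {a..<b}" and nz: "Du F (t, u) \<noteq> 0"
  shows "((\<lambda>\<tau>. norm (Du F (\<tau>, u))) has_real_derivative sgn (Du F (t, u)) \<bullet> Du (Dt {a..<b} F) (t, u))
           (at t within {a..<b})"
  using has_real_derivative_norm[OF Ck_on_has_vector_derivative_t[OF F, of "[False]" t u] _] nz t
  by (simp add: Ck_on_Dt_Du_commute[OF F t])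

lemma has_vector_derivative_periodic:
  assumes per: "\<And>x. f (x + p) = f x" and f: "(f has_vector_derivative f') (at (x + p))"
  shows "(f has_vector_derivative f') (at x)"
proof -
  have "((f \<circ> (\<lambda>y. y + p)) has_vector_derivative 1 *\<^sub>R f') (at x)"
    by (rule vector_diff_chain_at[where f = "\<lambda>y. y + p", OF _ f]) (auto intro!: derivative_eq_intros)
  moreover have "f \<circ> (\<lambda>y. y + p) = f" using per by (simp add: fun_eq_iff)
  ultimately show ?thesis by simp
qed

lemma periodic_add_of_int_mult:
  assumes per: "\<And>x. f (x + p) = f x"
  shows "f (x + of_int k * p) = f x"
proof (induction k rule: int_induct[where k = 0])
  case (step1 i)
  then show ?case using per[of "x + of_int i * p"] by (simp add: algebra_simps)
next
  case (step2 i)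
  then show ?case using per[of "x + of_int (i - 1) * p"] by (simp add: algebra_simps)
qed simp

lemma periodic_eq_frac:
  fixes p :: real
  assumes per: "\<And>x. f (x + p) = f x" and "p \<noteq> 0"
  shows "f x = f (p * frac (x / p))"
proof -
  have "x = p * frac (x / p) + of_int \<lfloor>x / p\<rfloor> * p"
    using assms(2) by (simp add: frac_def algebra_simps)
  then show ?thesis by (metis periodic_add_of_int_mult[where f = f, OF per])
qed

lemma frac_mult_mem:
  fixes p :: real
  assumes "p > 0" shows "p * frac x \<in> {0..p}"
  using assms frac_lt_1[of x] by (auto simp: mult_le_cancel_left1 less_imp_le)

lemma ratio_const_of_same_log_derivative:
  fixes f g c :: "real \<Rightarrow> real"
  assumes S: "convex S" "a \<in> S" "t \<in> S"
    and f: "\<And>\<tau>. \<tau> \<in> S \<Longrightarrow> (f has_real_derivative c \<tau> * f \<tau>) (at \<tau> within S)"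
    and g: "\<And>\<tau>. \<tau> \<in> S \<Longrightarrow> (g has_real_derivative c \<tau> * g \<tau>) (at \<tau> within S)"
    and g_nz: "\<And>\<tau>. \<tau> \<in> S \<Longrightarrow> g \<tau> \<noteq> 0"
  shows "f t * g a = f a * g t"
proof -
  have "((\<lambda>\<tau>. f \<tau> / g \<tau>) has_real_derivative 0) (at \<tau> within S)" if "\<tau> \<in> S" for \<tau>
    using DERIV_divide[OF f[OF that] g[OF that] g_nz[OF that]] by (simp add: algebra_simps)
  then obtain q where "\<forall>\<tau>\<in>S. f \<tau> / g \<tau> = q"
    using has_field_derivative_zero_constant[OF S(1)] by blast
  then have "f t / g t = f a / g a" using S(2,3) by simp
  then show ?thesis using g_nz[OF S(2)] g_nz[OF S(3)] by (simp add: frac_eq_eq)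
qed

locale curve_flow =
  fixes \<gamma> :: "real \<Rightarrow> real \<Rightarrow> real^3" and \<theta> :: "real \<Rightarrow> real \<Rightarrow> real"
    and \<upsilon>T0 :: "real \<Rightarrow> real" and tb :: real
  assumes tb_pos: "tb > 0"
    and \<gamma>_C2: "Ck_on {0..<tb} 2 (\<lambda>p. \<gamma> (fst p) (snd p))"
    and \<gamma>_periodic: "\<And>t u. t \<in> {0..<tb} \<Longrightarrow> \<gamma> t (u + 2*pi) = \<gamma> t u"
    and regular: "\<And>t u. t \<in> {0..<tb} \<Longrightarrow> speed \<gamma> t u > 0"
    and \<theta>_continuous: "\<And>t. t \<in> {0..<tb} \<Longrightarrow> continuous_on UNIV (\<theta> t)"
    and flow: "\<And>t u. t \<in> {0..<tb} \<Longrightarrow> u \<in> {0..2*pi} \<Longrightarrow>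
          ((\<lambda>\<tau>. \<gamma> \<tau> u) has_vector_derivative
             kappa_nu \<gamma> \<theta> t u + tangential_velocity \<gamma> \<theta> \<upsilon>T0 t u *\<^sub>R tangent \<gamma> t u)
          (at t within {0..<tb})"
begin

abbreviation \<Gamma> :: "real \<times> real \<Rightarrow> real^3" where
  "\<Gamma> \<equiv> \<lambda>p. \<gamma> (fst p) (snd p)"

definition mean_kappa_psi1 :: "real \<Rightarrow> real" where
  "mean_kappa_psi1 t =
     integral {0..2*pi} (\<lambda>v. curvature \<gamma> t v * psi1 \<gamma> \<theta> t v * speed \<gamma> t v) / curve_length \<gamma> t"

context
  fixes t :: real
  assumes t: "t \<in> {0..<tb}"
begin

lemma has_vector_derivative_curve: "(\<gamma> t has_vector_derivative Du \<Gamma> (t, v)) (at v)"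
  using Ck_on_has_vector_derivative_u[OF \<gamma>_C2, of "[]" t v] t by simp

lemma has_vector_derivative_Du: "((\<lambda>v. Du \<Gamma> (t, v)) has_vector_derivative Du (Du \<Gamma>) (t, v)) (at v)"
  using Ck_on_has_vector_derivative_u[OF \<gamma>_C2, of "[False]" t v] t by simp

lemma speed_eq_norm_Du: "speed \<gamma> t v = norm (Du \<Gamma> (t, v))"
  by (simp add: speed_def vector_derivative_at[OF has_vector_derivative_curve])

lemma Du_nonzero: "Du \<Gamma> (t, v) \<noteq> 0"
  using regular[OF t, of v] by (auto simp: speed_eq_norm_Du)

lemma tangent_eq_sgn_Du: "tangent \<gamma> t v = sgn (Du \<Gamma> (t, v))"
  by (simp add: tangent_def dS_def speed_eq_norm_Du vector_derivative_at[OF has_vector_derivative_curve]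
      sgn_div_norm inverse_eq_divide)

lemma curv_vec_eq:
  "curv_vec \<gamma> t v =
     (Du (Du \<Gamma>) (t, v) - (sgn (Du \<Gamma> (t, v)) \<bullet> Du (Du \<Gamma>) (t, v)) *\<^sub>R sgn (Du \<Gamma> (t, v)))
       /\<^sub>R (norm (Du \<Gamma> (t, v)))\<^sup>2"
proof -
  have "(tangent \<gamma> t has_vector_derivative
      (Du (Du \<Gamma>) (t, v) - (sgn (Du \<Gamma> (t, v)) \<bullet> Du (Du \<Gamma>) (t, v)) *\<^sub>R sgn (Du \<Gamma> (t, v)))
        /\<^sub>R norm (Du \<Gamma> (t, v))) (at v)"
    using has_vector_derivative_sgn[OF has_vector_derivative_Du Du_nonzero]
    by (simp add: tangent_eq_sgn_Du[abs_def])
  then show ?thesis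
    by (simp add: curv_vec_def dS_def vector_derivative_at speed_eq_norm_Du power2_eq_square
        inverse_eq_divide)
qed

lemma has_vector_derivative_tangent:
  "(tangent \<gamma> t has_vector_derivative speed \<gamma> t v *\<^sub>R curv_vec \<gamma> t v) (at v)"
proof -
  have "speed \<gamma> t v *\<^sub>R curv_vec \<gamma> t v =
      (Du (Du \<Gamma>) (t, v) - (sgn (Du \<Gamma> (t, v)) \<bullet> Du (Du \<Gamma>) (t, v)) *\<^sub>R sgn (Du \<Gamma> (t, v)))
        /\<^sub>R norm (Du \<Gamma> (t, v))"
    using Du_nonzero[of v] by (simp add: curv_vec_eq speed_eq_norm_Du power2_eq_square)
  then show ?thesis
    using has_vector_derivative_sgn[OF has_vector_derivative_Du Du_nonzero]
    by (simp add: tangent_eq_sgn_Du[abs_def])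
qed

lemma inner_tangent_self: "tangent \<gamma> t v \<bullet> tangent \<gamma> t v = 1"
  using Du_nonzero[of v] by (simp add: tangent_eq_sgn_Du norm_sgn flip: power2_norm_eq_inner)

lemma inner_tangent_curv_vec: "tangent \<gamma> t v \<bullet> curv_vec \<gamma> t v = 0"
  using inner_tangent_self[of v]
  by (simp add: curv_vec_eq flip: tangent_eq_sgn_Du) (simp add: inner_diff_right)

lemma continuous_on_speed: "continuous_on S (speed \<gamma> t)"
  using Ck_on_continuous_on_u[OF \<gamma>_C2, of "[False]" t S] t
  by (simp add: speed_eq_norm_Du[abs_def] continuous_on_norm)

lemma continuous_on_curvature: "continuous_on S (curvature \<gamma> t)"
proof -
  have "continuous_on S (\<lambda>v. Du \<Gamma> (t, v))" "continuous_on S (\<lambda>v. Du (Du \<Gamma>) (t, v))"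
    using Ck_on_continuous_on_u[OF \<gamma>_C2, of "[False]" t S]
      Ck_on_continuous_on_u[OF \<gamma>_C2, of "[False, False]" t S] t by simp_all
  then show ?thesis
    unfolding curvature_def[abs_def] curv_vec_eq
    by (intro continuous_intros) (auto simp: Du_nonzero)
qed

lemma continuous_on_kappa_psi1:
  "continuous_on S (\<lambda>v. curvature \<gamma> t v * psi1 \<gamma> \<theta> t v * speed \<gamma> t v)"
  unfolding psi1_def
  by (intro continuous_intros continuous_on_curvature continuous_on_speed
      continuous_on_subset[OF \<theta>_continuous[OF t]]) auto

lemma velocity_eq:
  assumes "v \<in> {0..2*pi}"
  shows "Dt {0..<tb} \<Gamma> (t, v) = kappa_nu \<gamma> \<theta> t v + tangential_velocity \<gamma> \<theta> \<upsilon>T0 t v *\<^sub>R tangent \<gamma> t v"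
proof (rule vector_derivative_unique_within)
  show "at t within {0..<tb} \<noteq> bot"
    using t tb_pos by (auto simp: trivial_limit_within)
qed (use Ck_on_has_vector_derivative_t[OF \<gamma>_C2 _ t, of "[]" v] flow[OF t assms] in simp_all)

lemma inner_velocity_tangent:
  assumes "v \<in> {0..2*pi}"
  shows "Dt {0..<tb} \<Gamma> (t, v) \<bullet> tangent \<gamma> t v = tangential_velocity \<gamma> \<theta> \<upsilon>T0 t v"
  using inner_tangent_self[of v] inner_tangent_curv_vec[of v]
  by (simp add: velocity_eq[OF assms] kappa_nu_def inner_add_left dot_cross_self
      inner_commute[of "curv_vec \<gamma> t v"])

lemma inner_velocity_curv_vec:
  assumes "v \<in> {0..2*pi}"
  shows "Dt {0..<tb} \<Gamma> (t, v) \<bullet> curv_vec \<gamma> t v = cos (\<theta> t v) * (curvature \<gamma> t v)\<^sup>2"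
  using inner_tangent_curv_vec[of v]
  by (simp add: velocity_eq[OF assms] kappa_nu_def inner_add_left dot_cross_self
      curvature_def power2_norm_eq_inner)

lemma tangential_velocity_has_real_derivative:
  assumes u: "u \<in> {0..2*pi}"
  shows "(tangential_velocity \<gamma> \<theta> \<upsilon>T0 t has_real_derivative
           curvature \<gamma> t u * psi1 \<gamma> \<theta> t u * speed \<gamma> t u - mean_kappa_psi1 t * speed \<gamma> t u)
           (at u within {0..2*pi})"
proof -
  have "tangential_velocity \<gamma> \<theta> \<upsilon>T0 t = (\<lambda>v. \<upsilon>T0 t
      + integral {0..v} (\<lambda>v. curvature \<gamma> t v * psi1 \<gamma> \<theta> t v * speed \<gamma> t v)
      - mean_kappa_psi1 t * integral {0..v} (speed \<gamma> t))"
    by (simp add: fun_eq_iff tangential_velocity_def arclength_def mean_kappa_psi1_def)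
  then show ?thesis
    using integral_has_real_derivative[OF continuous_on_kappa_psi1 u]
      integral_has_real_derivative[OF continuous_on_speed u]
    by (auto intro!: derivative_eq_intros)
qed

lemma inner_Du_velocity_tangent:
  assumes u: "u \<in> {0..2*pi}"
  shows "Du (Dt {0..<tb} \<Gamma>) (t, u) \<bullet> tangent \<gamma> t u = - mean_kappa_psi1 t * speed \<gamma> t u"
proof -
  \<comment> \<open>Differentiate \<open>\<langle>V, T\<rangle> = \<upsilon>\<^sub>T\<close> in \<open>u\<close> by the product rule and compare with the
     prescribed derivative of \<open>\<upsilon>\<^sub>T\<close>.\<close>
  have "((\<lambda>v. Dt {0..<tb} \<Gamma> (t, v) \<bullet> tangent \<gamma> t v) has_real_derivative
      Du (Dt {0..<tb} \<Gamma>) (t, u) \<bullet> tangent \<gamma> t u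
      + speed \<gamma> t u * (Dt {0..<tb} \<Gamma> (t, u) \<bullet> curv_vec \<gamma> t u)) (at u within {0..2*pi})"
    using has_real_derivative_inner[OF Ck_on_has_vector_derivative_u[OF \<gamma>_C2, of "[True]" t u]
        has_vector_derivative_tangent] t
    by (auto intro: has_field_derivative_at_within)
  then have "(tangential_velocity \<gamma> \<theta> \<upsilon>T0 t has_real_derivative
      Du (Dt {0..<tb} \<Gamma>) (t, u) \<bullet> tangent \<gamma> t u
      + speed \<gamma> t u * (Dt {0..<tb} \<Gamma> (t, u) \<bullet> curv_vec \<gamma> t u)) (at u within {0..2*pi})"
    by (rule has_field_derivative_transform_within[OF _ zero_less_one u])
       (simp add: inner_velocity_tangent)
  moreover have "at u within {0..2*pi} \<noteq> bot"
    using u by (auto simp: trivial_limit_within)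
  ultimately have "Du (Dt {0..<tb} \<Gamma>) (t, u) \<bullet> tangent \<gamma> t u
      + speed \<gamma> t u * (Dt {0..<tb} \<Gamma> (t, u) \<bullet> curv_vec \<gamma> t u)
      = curvature \<gamma> t u * psi1 \<gamma> \<theta> t u * speed \<gamma> t u - mean_kappa_psi1 t * speed \<gamma> t u"
    using has_field_derivative_unique tangential_velocity_has_real_derivative[OF u] by blast
  then show ?thesis
    using inner_velocity_curv_vec[OF u] by (simp add: psi1_def power2_eq_square)
qed

end

lemma speed_has_real_derivative:
  assumes t: "t \<in> {0..<tb}" and u: "u \<in> {0..2*pi}"
  shows "((\<lambda>\<tau>. speed \<gamma> \<tau> u) has_real_derivative - mean_kappa_psi1 t * speed \<gamma> t u)
           (at t within {0..<tb})"
proof -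
  have "sgn (Du \<Gamma> (t, u)) \<bullet> Du (Dt {0..<tb} \<Gamma>) (t, u) = - mean_kappa_psi1 t * speed \<gamma> t u"
    using inner_Du_velocity_tangent[OF t u] by (simp add: tangent_eq_sgn_Du[OF t] inner_commute)
  then have "((\<lambda>\<tau>. norm (Du \<Gamma> (\<tau>, u))) has_real_derivative - mean_kappa_psi1 t * speed \<gamma> t u)
      (at t within {0..<tb})"
    using Ck_on_has_real_derivative_norm_Du[OF \<gamma>_C2 t Du_nonzero[OF t, of u]] by simp
  then show ?thesis
    by (rule has_field_derivative_transform_within[OF _ zero_less_one t])
       (simp add: speed_eq_norm_Du)
qed

lemma speed_periodic:
  assumes t: "t \<in> {0..<tb}"
  shows "speed \<gamma> t (u + 2*pi) = speed \<gamma> t u"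
proof -
  have "(\<gamma> t has_vector_derivative Du \<Gamma> (t, u + 2*pi)) (at u)"
    by (rule has_vector_derivative_periodic[OF \<gamma>_periodic[OF t] has_vector_derivative_curve[OF t]])
  from vector_derivative_unique_at[OF this has_vector_derivative_curve[OF t]] show ?thesis
    by (simp add: speed_eq_norm_Du[OF t])
qed

lemma speed_ratio_const:
  assumes t: "t \<in> {0..<tb}" and u: "u \<in> {0..2*pi}" and u': "u' \<in> {0..2*pi}"
  shows "speed \<gamma> t u * speed \<gamma> 0 u' = speed \<gamma> 0 u * speed \<gamma> t u'"
proof (rule ratio_const_of_same_log_derivative[where S = "{0..<tb}" and c = "\<lambda>\<tau>. - mean_kappa_psi1 \<tau>"])
  show "speed \<gamma> \<tau> u' \<noteq> 0" if "\<tau> \<in> {0..<tb}" for \<tau>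
    using regular[OF that, of u'] by simp
qed (use tb_pos t speed_has_real_derivative u u' in auto)

lemma speed_div_curve_length_const:
  assumes t: "t \<in> {0..<tb}"
  shows "speed \<gamma> t u / curve_length \<gamma> t = speed \<gamma> 0 u / curve_length \<gamma> 0"
proof -
  have t0: "0 \<in> {0..<tb}" using tb_pos by simp
  define u0 where "u0 = 2*pi * frac (u / (2*pi))"
  have u0: "u0 \<in> {0..2*pi}" unfolding u0_def by (rule frac_mult_mem) simp
  have red: "speed \<gamma> \<tau> u = speed \<gamma> \<tau> u0" if "\<tau> \<in> {0..<tb}" for \<tau>
    unfolding u0_def by (rule periodic_eq_frac[where f = "speed \<gamma> \<tau>"]) (simp_all add: speed_periodic[OF that])
  have "integral {0..2*pi} (\<lambda>u'. speed \<gamma> t u0 * speed \<gamma> 0 u') =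
      integral {0..2*pi} (\<lambda>u'. speed \<gamma> 0 u0 * speed \<gamma> t u')"
    by (rule integral_cong) (use speed_ratio_const[OF t u0] in simp)
  then have "speed \<gamma> t u0 * curve_length \<gamma> 0 = speed \<gamma> 0 u0 * curve_length \<gamma> t"
    by (simp add: curve_length_def)
  then show ?thesis
    using regular[OF t, of u0] regular[OF t0, of u0] red[OF t] red[OF t0]
    by (cases "curve_length \<gamma> 0 = 0") (auto simp: field_simps)
qed

end

theorem mainTheorem2:
  fixes \<gamma> :: "real \<Rightarrow> real \<Rightarrow> real^3"
    and \<theta> \<upsilon>\<theta> :: "real \<Rightarrow> real \<Rightarrow> real"
    and \<upsilon>T0 :: "real \<Rightarrow> real"
    and tb :: real
  assumes tb_pos: "tb > 0"
    and \<gamma>_smooth: "smooth_on_st {0..<tb} (\<lambda>p. \<gamma> (fst p) (snd p))"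
    and \<gamma>_periodic: "\<forall>t\<in>{0..<tb}. \<forall>u. \<gamma> t (u + 2*pi) = \<gamma> t u"
    and regular: "\<forall>t\<in>{0..<tb}. \<forall>u. speed \<gamma> t u > 0"
    and \<theta>_smooth: "smooth_on_st {0..<tb} (\<lambda>p. \<theta> (fst p) (snd p))"
    and \<theta>_periodic: "\<forall>t\<in>{0..<tb}. \<forall>u. cos (\<theta> t (u + 2*pi)) = cos (\<theta> t u) \<and> sin (\<theta> t (u + 2*pi)) = sin (\<theta> t u)"
    and \<upsilon>\<theta>_C1: "Ck_on {0..<tb} 1 (\<lambda>p. \<upsilon>\<theta> (fst p) (snd p))"
    and \<upsilon>T0_C1: "C1_time {0..<tb} \<upsilon>T0"
    and flow_\<gamma>: "\<forall>t\<in>{0..<tb}. \<forall>u\<in>{0..2*pi}.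
          ((\<lambda>\<tau>. \<gamma> \<tau> u) has_vector_derivative
             (kappa_nu \<gamma> \<theta> t u + tangential_velocity \<gamma> \<theta> \<upsilon>T0 t u *\<^sub>R tangent \<gamma> t u))
          (at t within {0..<tb})"
    and flow_\<theta>: "\<forall>t\<in>{0..<tb}. \<forall>u.
          ((\<lambda>\<tau>. \<theta> \<tau> u) has_real_derivative \<upsilon>\<theta> t u) (at t within {0..<tb})"
  shows "\<forall>u. \<forall>t\<in>{0..<tb}. speed \<gamma> t u / curve_length \<gamma> t = speed \<gamma> 0 u / curve_length \<gamma> 0"
proof -
  interpret curve_flow \<gamma> \<theta> \<upsilon>T0 tb
  proof
    show "Ck_on {0..<tb} 2 (\<lambda>p. \<gamma> (fst p) (snd p))"
      using \<gamma>_smooth by (rule smooth_on_st_imp_Ck_on)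
    show "continuous_on UNIV (\<theta> t)" if "t \<in> {0..<tb}" for t
      using Ck_on_continuous_on_u[OF smooth_on_st_imp_Ck_on[OF \<theta>_smooth, of 0], of "[]" t] that
      by simp
  qed (use tb_pos \<gamma>_periodic regular flow_\<gamma> in auto)
  show ?thesis
    using speed_div_curve_length_const by blast
qed

end
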